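(* Let $n$ be a positive integer, $\pi\in\mathrm{NC}_B(n)$ and $\psi(\pi)=(\sigma,x)$. Write $i\sim_\pi j$ (resp. $i\sim_\sigma j$) if $i,j$ lie in the same block of $\pi$ (resp. $\sigma$), and $i\not\sim_\pi j$ otherwise. Let $i<j$ be positive integers in $[n]$ with $i\sim_\sigma j$. Then: (1) if $x=\emptyset$, then $i\sim_\pi j$ and $i\not\sim_\pi -j$; (2) if $x$ is an edge $(a,b)$ of $\sigma$, then $i\not\sim_\pi j$ and $i\sim_\pi -j$ when $i\le a<b\le j$, and $i\sim_\pi j$ and $i\not\sim_\pi -j$ otherwise; (3) if $x$ is a block $B$ of $\sigma$, then $i\sim_\pi j$ and $i\sim_\pi -j$ when $\{i,j\}\subseteq B$; $i\not\sim_\pi j$ and $i\sim_\pi -j$ when $\{i,j\}\not\subseteq B$ and $i<\min B\le\max B<j$; and $i\sim_\pi j$ and $i\not\sim_\pi -j$ otherwise.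
   Context: $[\pm n]=\{1,\dots,n,-1,\dots,-n\}$. A partition of type $B_n$ is a partition $\pi$ of $[\pm n]$ such that $-B$ is a block whenever $B$ is, with at most one block satisfying $B=-B$; it is noncrossing if, in the linear order $1<\cdots<n<-1<\cdots<-n$, there are no $a<b<c<d$ with $a,c$ in one block and $b,d$ in another. $\mathrm{NC}_B(n)$ is the set of these; $\mathrm{NC}(n)$ is the set of noncrossing partitions of $[n]$. An edge of $\sigma\in\mathrm{NC}(n)$ is a pair $(i,j)$, $i<j$, with $i,j$ in a common block containing no integer strictly between them. The map $\psi$: given $\pi\in\mathrm{NC}_B(n)$, let $\eta$ be obtained by deleting all negative integers from the blocks of $\pi$ (discarding empty sets), and let $X$ be the set of blocks $A$ of $\eta$ such that the block of $\pi$ containing $A$ also contains a negative integer. Write $X=\{A_1,\dots,A_m\}$ with $\max A_1<\cdots<\max A_m$. Let $\sigma$ be obtained from $\eta$ by merging $A_i$ and $A_{m+1-i}$ for $i=1,\dots,\lfloor m/2\rfloor$; $x=\emptyset$ if $m=0$, $x=(\max A_{m/2},\min A_{m/2+1})$ if $m>0$ is even, $x=A_{(m+1)/2}$ if $m$ is odd; $\psi(\pi)=(\sigma,x)$. *)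

theory Defs
  imports Main "HOL-Library.Disjoint_Sets"
begin

definition signed_set :: "nat \<Rightarrow> int set" where
  "signed_set n = {i. 1 \<le> \<bar>i\<bar> \<and> \<bar>i\<bar> \<le> int n}"

text \<open>Position in the linear order 1 < ... < n < -1 < ... < -n.\<close>
definition posB :: "nat \<Rightarrow> int \<Rightarrow> int" where
  "posB n i = (if i > 0 then i else int n - i)"

definition same_block :: "int set set \<Rightarrow> int \<Rightarrow> int \<Rightarrow> bool" where
  "same_block P i j \<longleftrightarrow> (\<exists>B\<in>P. i \<in> B \<and> j \<in> B)"

definition noncrossingB :: "nat \<Rightarrow> int set set \<Rightarrow> bool" where
  "noncrossingB n P \<longleftrightarrow>
     \<not> (\<exists>B1\<in>P. \<exists>B2\<in>P. B1 \<noteq> B2 \<and>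
          (\<exists>a b c d. a \<in> B1 \<and> c \<in> B1 \<and> b \<in> B2 \<and> d \<in> B2 \<and>
             posB n a < posB n b \<and> posB n b < posB n c \<and> posB n c < posB n d))"

definition NCB :: "nat \<Rightarrow> int set set set" where
  "NCB n = {P. partition_on (signed_set n) P \<and>
               (\<forall>B\<in>P. uminus ` B \<in> P) \<and>
               card {B\<in>P. uminus ` B = B} \<le> 1 \<and>
               noncrossingB n P}"

datatype xdata = XEmpty | XEdge int int | XBlock "int set"

definition etaB :: "nat \<Rightarrow> int set set \<Rightarrow> int set set" where
  "etaB n P = {B \<inter> {1..int n} | B. B \<in> P} - {{}}"

definition XB :: "nat \<Rightarrow> int set set \<Rightarrow> int set set" where
  "XB n P = {A \<in> etaB n P. \<exists>B\<in>P. A \<subseteq> B \<and> (\<exists>k\<in>B. k < 0)}"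

definition Ablk :: "nat \<Rightarrow> int set set \<Rightarrow> nat \<Rightarrow> int set" where
  "Ablk n P k = (THE A. A \<in> XB n P \<and>
                   Max A = sorted_list_of_set (Max ` XB n P) ! (k - 1))"

definition psi :: "nat \<Rightarrow> int set set \<Rightarrow> int set set \<times> xdata" where
  "psi n P = (let X = XB n P; m = card X; A = Ablk n P in
     ((etaB n P - X) \<union> {A k \<union> A (m + 1 - k) | k. 1 \<le> k \<and> k \<le> m},
      if m = 0 then XEmpty
      else if even m then XEdge (Max (A (m div 2))) (Min (A (m div 2 + 1)))
      else XBlock (A ((m + 1) div 2))))"

end

theory Submission
  imports Defs
begin

text \<open>
  Call a block of \<open>\<pi>\<close> mixed if it contains integers of both signs; \<open>X\<close> consists of the
  positive parts \<open>C\<^sup>+\<close> of the mixed blocks \<open>C\<close>. Negation permutes the mixed blocks and, by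
  noncrossingness, reverses their order by \<open>max C\<^sup>+\<close>. Hence \<open>A\<^sub>k\<close> and \<open>A\<^sub>m\<^sub>+\<^sub>1\<^sub>-\<^sub>k\<close> are \<open>C\<^sup>+\<close>
  and \<open>(-C)\<^sup>+\<close> for one mixed block \<open>C\<close>, every block of \<open>\<sigma>\<close> is \<open>C\<^sup>+\<close> or \<open>C\<^sup>+ \<union> (-C)\<^sup>+\<close> for a
  block \<open>C\<close> of \<open>\<pi>\<close>, and \<open>i \<sim>\<^sub>\<sigma> j\<close> yields \<open>i \<sim>\<^sub>\<pi> j\<close> or \<open>i \<sim>\<^sub>\<pi> -j\<close>.
  Which of the two holds is read off the middle of the order. For odd \<open>m\<close> the middle block \<open>Z\<close>
  is self-negating, and by noncrossingness a block through \<open>i, j\<close> cannot enclose \<open>Z\<^sup>+\<close> while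
  a block through \<open>i, -j\<close> must. For even \<open>m\<close> the middle is a pair \<open>C, -C\<close>, adjacent in the
  order, and \<open>x\<close> is the edge \<open>(max C\<^sup>+, min (-C)\<^sup>+)\<close>: a block through \<open>i, j\<close> cannot straddle
  it, and a block through \<open>i, -j\<close> must, as otherwise it would be a mixed block strictly
  between \<open>C\<close> and \<open>-C\<close>.
\<close>

lemma strict_antimono_self_map_eq_reverse:
  fixes f :: "nat \<Rightarrow> nat"
  assumes maps: "\<And>k. k < m \<Longrightarrow> f k < m"
    and dec: "\<And>k l. k < l \<Longrightarrow> l < m \<Longrightarrow> f l < f k"
    and "k < m"
  shows "f k = m - 1 - k"
proof -
  have "f k + k \<le> m - 1"
    using \<open>k < m\<close>
  proof (induction k)
    case 0
    then show ?case using maps by fastforce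
  next
    case (Suc k)
    then show ?case using dec[of k "Suc k"] by fastforce
  qed
  moreover have "k \<le> m - 1" using \<open>k < m\<close> by simp
  then have "m - 1 \<le> f k + k"
  proof (induction rule: inc_induct)
    case (step k)
    then show ?case using dec[of k "Suc k"] by fastforce
  qed simp
  ultimately show ?thesis by simp
qed

lemma posB_pos [simp]: "x > 0 \<Longrightarrow> posB n x = x"
  by (simp add: posB_def)

lemma posB_neg [simp]: "x > 0 \<Longrightarrow> posB n (- x) = int n + x"
  by (simp add: posB_def)

lemma mem_uminus_image_iff: "(x :: int) \<in> uminus ` B \<longleftrightarrow> - x \<in> B"
  by force

lemma same_blockI: "B \<in> P \<Longrightarrow> x \<in> B \<Longrightarrow> y \<in> B \<Longrightarrow> same_block P x y"
  unfolding same_block_def by blast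

lemma same_blockE:
  assumes "same_block P x y"
  obtains B where "B \<in> P" "x \<in> B" "y \<in> B"
  using assms unfolding same_block_def by blast

locale noncrossing_B =
  fixes n :: nat and P :: "int set set"
  assumes in_NCB: "P \<in> NCB n"
begin

lemma partition: "partition_on (signed_set n) P"
  using in_NCB by (simp add: NCB_def)

lemma uminus_block: "B \<in> P \<Longrightarrow> uminus ` B \<in> P"
  using in_NCB by (simp add: NCB_def)

lemma block_eqI: "B1 \<in> P \<Longrightarrow> B2 \<in> P \<Longrightarrow> x \<in> B1 \<Longrightarrow> x \<in> B2 \<Longrightarrow> B1 = B2"
  using partition unfolding partition_on_def disjoint_def by blast

lemma block_elem:
  assumes "B \<in> P" "x \<in> B"
  shows "x \<noteq> 0 \<and> \<bar>x\<bar> \<le> int n"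
proof -
  have "x \<in> signed_set n" using assms partition_onD1[OF partition] by blast
  then show ?thesis unfolding signed_set_def by auto
qed

lemma block_nonempty: "B \<in> P \<Longrightarrow> B \<noteq> {}"
  using partition unfolding partition_on_def by auto

lemma finite_signed_set: "finite (signed_set n)"
  by (rule finite_subset[of _ "{- int n..int n}"]) (auto simp: signed_set_def)

lemma finite_blocks: "finite P"
proof -
  have "finite (\<Union>P)" using finite_signed_set partition_onD1[OF partition] by simp
  then show ?thesis by (rule finite_UnionD)
qed

lemma finite_block: "B \<in> P \<Longrightarrow> finite B"
  using finite_subset[OF _ finite_signed_set] partition_onD1[OF partition] by blast

lemma noncrossing:
  assumes "B1 \<in> P" "B2 \<in> P" "B1 \<noteq> B2" "a \<in> B1" "c \<in> B1" "b \<in> B2" "d \<in> B2"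
    and "posB n a < posB n b" "posB n b < posB n c" "posB n c < posB n d"
  shows False
proof -
  have "noncrossingB n P" using in_NCB by (simp add: NCB_def)
  then show False unfolding noncrossingB_def using assms by metis
qed

definition pos_part :: "int set \<Rightarrow> int set" where
  "pos_part C = C \<inter> {1..int n}"

definition mixed_blocks :: "int set set" where
  "mixed_blocks = {C\<in>P. (\<exists>k\<in>C. k > 0) \<and> (\<exists>k\<in>C. k < 0)}"

definition pmax :: "int set \<Rightarrow> int" where
  "pmax C = Max (pos_part C)"

lemma pos_partI: "C \<in> P \<Longrightarrow> x \<in> C \<Longrightarrow> x > 0 \<Longrightarrow> x \<in> pos_part C"
  using block_elem by (fastforce simp: pos_part_def)

lemma pos_partD: "x \<in> pos_part C \<Longrightarrow> x \<in> C \<and> x > 0 \<and> x \<le> int n"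
  by (auto simp: pos_part_def)

lemma finite_pos_part: "C \<in> P \<Longrightarrow> finite (pos_part C)"
  using finite_block by (simp add: pos_part_def)

lemma mixed_blocks_subset: "C \<in> mixed_blocks \<Longrightarrow> C \<in> P"
  by (simp add: mixed_blocks_def)

lemma finite_mixed_blocks: "finite mixed_blocks"
  using finite_blocks by (simp add: mixed_blocks_def)

lemma mixed_blocksI: "C \<in> P \<Longrightarrow> i \<in> C \<Longrightarrow> - j \<in> C \<Longrightarrow> i > 0 \<Longrightarrow> j > 0 \<Longrightarrow> C \<in> mixed_blocks"
  unfolding mixed_blocks_def by force

lemma uminus_mixed_block: "C \<in> mixed_blocks \<Longrightarrow> uminus ` C \<in> mixed_blocks"
  unfolding mixed_blocks_def using uminus_block by fastforce

lemma pos_part_nonempty: "C \<in> mixed_blocks \<Longrightarrow> pos_part C \<noteq> {}"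
  using pos_partI unfolding mixed_blocks_def by blast

lemma pmax_in: "C \<in> mixed_blocks \<Longrightarrow> pmax C \<in> pos_part C"
  unfolding pmax_def using pos_part_nonempty finite_pos_part mixed_blocks_subset Max_in by blast

lemma pmax_ge: "C \<in> mixed_blocks \<Longrightarrow> x \<in> pos_part C \<Longrightarrow> x \<le> pmax C"
  unfolding pmax_def using finite_pos_part mixed_blocks_subset Max_ge by blast

lemma Min_pos_part_in: "C \<in> mixed_blocks \<Longrightarrow> Min (pos_part C) \<in> pos_part C"
  using Min_in[OF finite_pos_part[OF mixed_blocks_subset] pos_part_nonempty] .

lemma Min_pos_part_le: "C \<in> mixed_blocks \<Longrightarrow> x \<in> pos_part C \<Longrightarrow> Min (pos_part C) \<le> x"
  using Min_le[OF finite_pos_part[OF mixed_blocks_subset]] .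

lemma pmax_inj:
  assumes "C \<in> mixed_blocks" "C' \<in> mixed_blocks" "pmax C = pmax C'"
  shows "C = C'"
proof -
  have "pmax C \<in> C" "pmax C' \<in> C'" using assms(1,2) pmax_in pos_partD by blast+
  then show ?thesis using block_eqI mixed_blocks_subset assms by metis
qed

lemma XB_eq: "XB n P = pos_part ` mixed_blocks"
proof
  show "XB n P \<subseteq> pos_part ` mixed_blocks"
  proof
    fix A assume "A \<in> XB n P"
    then obtain B B' k where B: "B \<in> P" "A = pos_part B" "A \<noteq> {}"
      and B': "B' \<in> P" "A \<subseteq> B'" "k \<in> B'" "k < 0"
      unfolding XB_def etaB_def pos_part_def by blast
    from B(3) obtain x where "x \<in> A" by blast
    then have "x \<in> B" "x \<in> B'" "x > 0" using B B' by (auto simp: pos_part_def)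
    then have "B \<in> mixed_blocks"
      using block_eqI[OF B(1) B'(1)] B' by (auto simp: mixed_blocks_def)
    with B(2) show "A \<in> pos_part ` mixed_blocks" by blast
  qed
next
  show "pos_part ` mixed_blocks \<subseteq> XB n P"
  proof
    fix A assume "A \<in> pos_part ` mixed_blocks"
    then obtain C where C: "C \<in> mixed_blocks" "A = pos_part C" by blast
    then have "A \<in> etaB n P"
      using pos_part_nonempty mixed_blocks_subset unfolding etaB_def pos_part_def by blast
    then show "A \<in> XB n P"
      using C unfolding XB_def mixed_blocks_def pos_part_def by blast
  qed
qed

lemma card_XB: "card (XB n P) = card mixed_blocks"
proof -
  have "inj_on pos_part mixed_blocks"
    by (rule inj_onI) (metis pmax_def pmax_inj)
  then show ?thesis unfolding XB_eq by (rule card_image)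
qed

lemma pmax_uminus_reverse:
  assumes C: "C \<in> mixed_blocks" and C': "C' \<in> mixed_blocks" and less: "pmax C < pmax C'"
  shows "pmax (uminus ` C') < pmax (uminus ` C)"
proof (rule ccontr)
  define v where "v = pmax (uminus ` C)"
  define v' where "v' = pmax (uminus ` C')"
  assume "\<not> v' < v"
  have u: "pmax C \<in> C" "pmax C > 0" using pmax_in[OF C] pos_partD by auto
  have u': "pmax C' \<in> C'" "pmax C' > 0" "pmax C' \<le> int n" using pmax_in[OF C'] pos_partD by auto
  have v: "- v \<in> C" "v > 0"
    using pmax_in[OF uminus_mixed_block[OF C]] pos_partD mem_uminus_image_iff v_def by blast+
  have v': "- v' \<in> C'" "v' > 0"
    using pmax_in[OF uminus_mixed_block[OF C']] pos_partD mem_uminus_image_iff v'_def by blast+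
  have "C \<noteq> C'" using less by auto
  then have "v \<noteq> v'" using block_eqI C C' v v' mixed_blocks_subset by metis
  with \<open>\<not> v' < v\<close> have "v < v'" by simp
  show False
    using noncrossing[OF mixed_blocks_subset[OF C] mixed_blocks_subset[OF C'] \<open>C \<noteq> C'\<close>
        u(1) v(1) u'(1) v'(1)] u u' v v' less \<open>v < v'\<close>
    by simp
qed

definition pmax_list :: "int list" where
  "pmax_list = sorted_list_of_set (pmax ` mixed_blocks)"

definition mixed_block :: "nat \<Rightarrow> int set" where
  "mixed_block k = (THE C. C \<in> mixed_blocks \<and> pmax C = pmax_list ! (k - 1))"

lemma set_pmax_list: "set pmax_list = pmax ` mixed_blocks"
  unfolding pmax_list_def using finite_mixed_blocks by simp

lemma length_pmax_list: "length pmax_list = card mixed_blocks"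
  unfolding pmax_list_def using pmax_inj by (simp add: card_image inj_on_def)

lemma pmax_list_less: "k < l \<Longrightarrow> l < card mixed_blocks \<Longrightarrow> pmax_list ! k < pmax_list ! l"
  using sorted_wrt_nth_less[of "(<)" pmax_list k l] length_pmax_list by (simp add: pmax_list_def)

lemma pmax_list_less_iff:
  "k < card mixed_blocks \<Longrightarrow> l < card mixed_blocks \<Longrightarrow> pmax_list ! k < pmax_list ! l \<longleftrightarrow> k < l"
  using pmax_list_less[of k l] pmax_list_less[of l k] by (cases k l rule: linorder_cases) auto

lemma mixed_block_pmax_nth:
  assumes "1 \<le> k" "k \<le> card mixed_blocks"
  shows "mixed_block k \<in> mixed_blocks \<and> pmax (mixed_block k) = pmax_list ! (k - 1)"
proof -
  have "pmax_list ! (k - 1) \<in> set pmax_list" using assms length_pmax_list by auto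
  then obtain C where C: "C \<in> mixed_blocks" "pmax C = pmax_list ! (k - 1)"
    using set_pmax_list by auto
  have "\<exists>!C. C \<in> mixed_blocks \<and> pmax C = pmax_list ! (k - 1)"
  proof (rule ex1I[of _ C])
    fix C' assume "C' \<in> mixed_blocks \<and> pmax C' = pmax_list ! (k - 1)"
    then show "C' = C" using pmax_inj[of C' C] C by simp
  qed (use C in blast)
  then show ?thesis unfolding mixed_block_def by (rule theI')
qed

lemma mixed_block_pmax_less_iff:
  assumes "1 \<le> k" "k \<le> card mixed_blocks" "1 \<le> l" "l \<le> card mixed_blocks"
  shows "pmax (mixed_block k) < pmax (mixed_block l) \<longleftrightarrow> k < l"
  using assms mixed_block_pmax_nth pmax_list_less_iff[of "k - 1" "l - 1"] by auto

lemma mixed_block_surj: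
  assumes "C \<in> mixed_blocks"
  obtains k where "1 \<le> k" "k \<le> card mixed_blocks" "mixed_block k = C"
proof -
  have "pmax C \<in> set pmax_list" using assms set_pmax_list by simp
  then obtain l where l: "l < card mixed_blocks" "pmax_list ! l = pmax C"
    using length_pmax_list by (auto simp: in_set_conv_nth)
  then have "mixed_block (Suc l) = C" using mixed_block_pmax_nth[of "Suc l"] pmax_inj assms by auto
  with l show ?thesis by (intro that[of "Suc l"]) auto
qed

lemma Ablk_eq:
  assumes "1 \<le> k" "k \<le> card mixed_blocks"
  shows "Ablk n P k = pos_part (mixed_block k)"
  unfolding Ablk_def
proof (rule the_equality)
  have "sorted_list_of_set (Max ` XB n P) = pmax_list"
    unfolding XB_eq pmax_list_def pmax_def image_image ..
  then show "pos_part (mixed_block k) \<in> XB n P \<and>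
      Max (pos_part (mixed_block k)) = sorted_list_of_set (Max ` XB n P) ! (k - 1)"
    using mixed_block_pmax_nth[OF assms] XB_eq pmax_def by auto
  fix A assume A: "A \<in> XB n P \<and> Max A = sorted_list_of_set (Max ` XB n P) ! (k - 1)"
  then obtain C where C: "C \<in> mixed_blocks" "A = pos_part C" using XB_eq by auto
  with A have "pmax C = pmax (mixed_block k)"
    using mixed_block_pmax_nth[OF assms] by (simp add: XB_eq pmax_list_def pmax_def image_image)
  then have "C = mixed_block k" using pmax_inj C(1) mixed_block_pmax_nth[OF assms] by blast
  then show "A = pos_part (mixed_block k)" using C(2) by simp
qed

lemma mixed_block_uminus:
  assumes k: "1 \<le> k" "k \<le> card mixed_blocks"
  shows "mixed_block (card mixed_blocks + 1 - k) = uminus ` mixed_block k"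
proof -
  define m where "m = card mixed_blocks"
  have "\<exists>l. l < m \<and> mixed_block (Suc l) = uminus ` mixed_block (Suc k)" if "k < m" for k
  proof -
    have "uminus ` mixed_block (Suc k) \<in> mixed_blocks"
      using that mixed_block_pmax_nth[of "Suc k"] uminus_mixed_block m_def by simp
    then obtain l where "1 \<le> l" "l \<le> m" "mixed_block l = uminus ` mixed_block (Suc k)"
      using mixed_block_surj m_def by metis
    then show ?thesis by (intro exI[of _ "l - 1"]) simp
  qed
  then obtain f where f: "\<And>k. k < m \<Longrightarrow> f k < m \<and> mixed_block (Suc (f k)) = uminus ` mixed_block (Suc k)"
    by metis
  have "f l < f k" if "k < l" "l < m" for k l
    using that f[of k] f[of l] mixed_block_pmax_less_iff[of "Suc k" "Suc l"]
      mixed_block_pmax_less_iff[of "Suc (f l)" "Suc (f k)"] mixed_block_pmax_nth[of "Suc k"]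
      mixed_block_pmax_nth[of "Suc l"] pmax_uminus_reverse m_def
    by auto
  then have "f (k - 1) = m - 1 - (k - 1)"
    using strict_antimono_self_map_eq_reverse[of m f] f k m_def by auto
  then show ?thesis using f[of "k - 1"] k m_def by (simp add: Suc_diff_le)
qed

lemma same_block_neg_mixed:
  assumes "same_block P i (- j)" "i > 0" "j > 0"
  obtains C where "C \<in> mixed_blocks" "i \<in> C" "- j \<in> C"
  using assms mixed_blocksI same_blockE by metis

lemma self_neg_block_mixed:
  assumes "D \<in> P" "uminus ` D = D"
  shows "D \<in> mixed_blocks"
proof -
  obtain y where y: "y \<in> D" using block_nonempty[OF assms(1)] by blast
  then have "- y \<in> D" "y \<noteq> 0" using assms block_elem mem_uminus_image_iff by auto
  with y show ?thesis
    using mixed_blocksI[OF assms(1), of y y] mixed_blocksI[OF assms(1), of "- y" "- y"]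
    by (cases "y > 0") auto
qed

lemma same_block_psi:
  assumes "psi n P = (\<sigma>, x)" "same_block \<sigma> i j" "i > 0" "j > 0"
  shows "same_block P i j \<or> same_block P i (- j)"
proof -
  define m where "m = card mixed_blocks"
  have \<sigma>: "\<sigma> = (etaB n P - XB n P) \<union> {Ablk n P k \<union> Ablk n P (m + 1 - k) | k. 1 \<le> k \<and> k \<le> m}"
    using assms(1) unfolding psi_def Let_def card_XB m_def by simp
  obtain E where E: "E \<in> \<sigma>" "i \<in> E" "j \<in> E" using assms(2) by (rule same_blockE)
  show ?thesis
  proof (cases "E \<in> etaB n P - XB n P")
    case True
    then obtain B where "B \<in> P" "E = B \<inter> {1..int n}" by (auto simp: etaB_def)
    then show ?thesis using E same_blockI[of B P i j] by simp
  next
    case False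
    then obtain k where k: "1 \<le> k" "k \<le> m" "E = Ablk n P k \<union> Ablk n P (m + 1 - k)"
      using E(1) \<sigma> by auto
    define C where "C = mixed_block k"
    have E_eq: "E = pos_part C \<union> pos_part (uminus ` C)"
      using k Ablk_eq[of k] Ablk_eq[of "m + 1 - k"] mixed_block_uminus[of k]
      unfolding C_def m_def by simp
    have CP: "C \<in> P" "uminus ` C \<in> P"
      using mixed_block_pmax_nth[of k] k mixed_blocks_subset uminus_block unfolding C_def m_def by auto
    have "i \<in> C \<or> i \<in> uminus ` C" using E(2) E_eq pos_partD by auto
    then obtain D where D: "D \<in> {C, uminus ` C}" "i \<in> D" by auto
    then have "D \<in> P" using CP by auto
    have "j \<in> D \<or> j \<in> uminus ` D" using D(1) E(3) E_eq pos_partD by (auto simp: image_image)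
    then show ?thesis
      using same_blockI[OF \<open>D \<in> P\<close> D(2)] mem_uminus_image_iff[of j D] by auto
  qed
qed

lemma self_neg_block_pos_part:
  assumes "Z \<in> P" "uminus ` Z = Z" "z \<in> pos_part Z"
  shows "z \<in> Z \<and> - z \<in> Z \<and> 0 < z \<and> z \<le> int n"
  using pos_partD[OF assms(3)] assms(2) mem_uminus_image_iff[of "- z" Z] by auto

lemma self_neg_block_pos_part_nonempty:
  assumes "Z \<in> P" "uminus ` Z = Z"
  shows "pos_part Z \<noteq> {}"
  using self_neg_block_mixed[OF assms] pos_part_nonempty by simp

lemma same_block_self_neg_block:
  assumes "Z \<in> P" "uminus ` Z = Z" "{i, j} \<subseteq> pos_part Z"
  shows "same_block P i j \<and> same_block P i (- j)"
  using assms self_neg_block_pos_part[OF assms(1,2)] same_blockI[OF assms(1)] by auto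

lemma not_same_block_around_self_neg_block:
  assumes Z: "Z \<in> P" "uminus ` Z = Z"
    and "0 < i" "i < Min (pos_part Z)" "Max (pos_part Z) < j"
  shows "\<not> same_block P i j"
proof
  assume "same_block P i j"
  then obtain C where C: "C \<in> P" "i \<in> C" "j \<in> C" by (rule same_blockE)
  define z where "z = Min (pos_part Z)"
  have ne: "pos_part Z \<noteq> {}" and fin: "finite (pos_part Z)"
    using self_neg_block_pos_part_nonempty[OF Z] finite_pos_part[OF Z(1)] by auto
  then have "z \<in> pos_part Z" "z \<le> Max (pos_part Z)" unfolding z_def by auto
  then have z: "z \<in> Z" "- z \<in> Z" "0 < z" "z < j"
    using self_neg_block_pos_part[OF Z] assms(5) by auto
  have "i \<notin> Z" using pos_partI[OF Z(1) _ \<open>0 < i\<close>] Min_le[OF fin] assms(4) by force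
  then have "C \<noteq> Z" using C(2) by auto
  moreover have "j \<le> int n" using block_elem[OF C(1) C(3)] by auto
  ultimately show False
    using noncrossing[OF C(1) Z(1) _ C(2) C(3) z(1) z(2)] z assms(3,4) z_def by simp
qed

lemma same_block_neg_around_self_neg_block:
  assumes Z: "Z \<in> P" "uminus ` Z = Z"
    and "same_block P i (- j)" "\<not> {i, j} \<subseteq> pos_part Z" "0 < i" "i < j"
  shows "i < Min (pos_part Z) \<and> Max (pos_part Z) < j"
proof -
  obtain C where C: "C \<in> P" "i \<in> C" "- j \<in> C" using assms(3) by (rule same_blockE)
  have "C \<noteq> Z"
  proof
    assume "C = Z"
    then have "j \<in> Z" using C(3) Z(2) mem_uminus_image_iff[of j Z] by simp
    then show False using C(2) \<open>C = Z\<close> pos_partI[OF Z(1)] assms(4-6) by auto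
  qed
  have between: "i < z \<and> z < j" if "z \<in> pos_part Z" for z
  proof -
    have z: "z \<in> Z" "- z \<in> Z" "0 < z" "z \<le> int n" using self_neg_block_pos_part[OF Z that] by auto
    have i_le: "i \<le> int n" using block_elem[OF C(1) C(2)] by auto
    have "z \<noteq> i" "z \<noteq> j"
      using z block_eqI[OF C(1) Z(1)] C \<open>C \<noteq> Z\<close> by auto
    moreover have "\<not> (i < z \<and> j < z)"
      using noncrossing[OF C(1) Z(1) \<open>C \<noteq> Z\<close> C(2) C(3) z(1) z(2)] z assms(5,6) by auto
    moreover have "\<not> z < i"
      using noncrossing[OF Z(1) C(1) \<open>C \<noteq> Z\<close>[symmetric] z(1) z(2) C(2) C(3)] z i_le assms(5,6) by auto
    ultimately show ?thesis by auto
  qed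
  have "pos_part Z \<noteq> {}" "finite (pos_part Z)"
    using self_neg_block_pos_part_nonempty[OF Z] finite_pos_part[OF Z(1)] by auto
  then show ?thesis using between Min_in Max_in by metis
qed

lemma self_neg_block_case:
  assumes Z: "Z \<in> P" "uminus ` Z = Z"
    and ij: "0 < i" "i < j"
    and either: "same_block P i j \<or> same_block P i (- j)"
  defines "B \<equiv> pos_part Z"
  shows "if {i, j} \<subseteq> B then same_block P i j \<and> same_block P i (- j)
         else if i < Min B \<and> Max B < j then \<not> same_block P i j \<and> same_block P i (- j)
         else same_block P i j \<and> \<not> same_block P i (- j)"
proof (cases "{i, j} \<subseteq> B")
  case True
  then show ?thesis using same_block_self_neg_block[OF Z] unfolding B_def by simp
next
  case False
  show ?thesis
  proof (cases "i < Min B \<and> Max B < j")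
    case True
    then have "\<not> same_block P i j"
      using not_same_block_around_self_neg_block[OF Z] ij unfolding B_def by simp
    with True False either show ?thesis by simp
  next
    case outside: False
    then have "\<not> same_block P i (- j)"
      using same_block_neg_around_self_neg_block[OF Z _ False[unfolded B_def]] ij unfolding B_def by auto
    with outside False either show ?thesis by simp
  qed
qed

lemma pmax_less_Min_pos_part_uminus:
  assumes C: "C \<in> mixed_blocks" and less: "pmax C < pmax (uminus ` C)"
  shows "pmax C < Min (pos_part (uminus ` C))"
proof (rule ccontr)
  define a where "a = pmax C"
  define b where "b = Min (pos_part (uminus ` C))"
  define w where "w = pmax (uminus ` C)"
  assume "\<not> pmax C < Min (pos_part (uminus ` C))"
  have C': "uminus ` C \<in> mixed_blocks" using uminus_mixed_block[OF C] .
  have CP: "C \<in> P" "uminus ` C \<in> P" using C C' mixed_blocks_subset by auto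
  have "C \<noteq> uminus ` C" using less by auto
  have a: "a \<in> C" "0 < a" using pmax_in[OF C] pos_partD a_def by auto
  have b_in: "b \<in> pos_part (uminus ` C)"
    unfolding b_def using Min_pos_part_in[OF C'] .
  have b: "b \<in> uminus ` C" "- b \<in> C" "0 < b"
    using pos_partD[OF b_in] mem_uminus_image_iff by auto
  have w: "w \<in> uminus ` C" "w \<le> int n" using pmax_in[OF C'] pos_partD w_def by auto
  have "a \<noteq> b" using block_eqI[OF CP] a b \<open>C \<noteq> uminus ` C\<close> by auto
  then have "b < a" using \<open>\<not> pmax C < Min (pos_part (uminus ` C))\<close> a_def b_def by simp
  then show False
    using noncrossing[OF CP(2) CP(1) \<open>C \<noteq> uminus ` C\<close>[symmetric] b(1) w(1) a(1) b(2)]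
      less a b w a_def w_def by simp
qed

lemma not_same_block_across_edge:
  assumes C1: "C1 \<in> mixed_blocks" and less: "pmax C1 < pmax (uminus ` C1)"
    and "same_block P i j" "0 < i" "i < j"
  shows "\<not> (i \<le> pmax C1 \<and> Min (pos_part (uminus ` C1)) \<le> j)"
proof
  define a where "a = pmax C1"
  define b where "b = Min (pos_part (uminus ` C1))"
  assume span: "i \<le> pmax C1 \<and> Min (pos_part (uminus ` C1)) \<le> j"
  obtain C where C: "C \<in> P" "i \<in> C" "j \<in> C" using assms(3) by (rule same_blockE)
  have C1': "uminus ` C1 \<in> mixed_blocks" using uminus_mixed_block[OF C1] .
  have C1P: "C1 \<in> P" "uminus ` C1 \<in> P" using C1 C1' mixed_blocks_subset by auto
  have ab: "a < b" using pmax_less_Min_pos_part_uminus[OF C1 less] a_def b_def by simp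
  have a: "a \<in> C1" "0 < a" using pmax_in[OF C1] pos_partD a_def by auto
  have b_in: "b \<in> pos_part (uminus ` C1)"
    unfolding b_def using Min_pos_part_in[OF C1'] .
  have b: "- b \<in> C1" "0 < b" using pos_partD[OF b_in] mem_uminus_image_iff by auto
  have "j \<le> int n" using block_elem[OF C(1) C(3)] by auto
  consider "C = C1" | "C = uminus ` C1" | "C \<noteq> C1" "C \<noteq> uminus ` C1" by blast
  then show False
  proof cases
    case 1
    then have "j \<le> a" using pmax_ge[OF C1] pos_partI C assms(4,5) a_def by auto
    then show False using span ab a_def b_def by simp
  next
    case 2
    then have "b \<le> i"
      using Min_pos_part_le[OF C1'] pos_partI C assms(4) b_def by auto
    then show False using span ab a_def b_def by simp
  next
    case 3
    have "i \<noteq> a" using block_eqI[OF C(1) C1P(1) C(2)] a(1) 3(1) by auto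
    then show False
      using noncrossing[OF C(1) C1P(1) 3(1) C(2) C(3) a(1) b(1)] span ab a b assms(4,5)
        \<open>j \<le> int n\<close> a_def b_def by simp
  qed
qed

lemma mixed_block_inside_edge:
  assumes C1: "C1 \<in> mixed_blocks" and less: "pmax C1 < pmax (uminus ` C1)"
    and C: "C \<in> P" "i \<in> C" "- j \<in> C" "C \<noteq> uminus ` C1"
    and ij: "0 < i" "i < j" and inside: "pmax C1 < i" "j < Min (pos_part (uminus ` C1))"
  shows "C \<in> mixed_blocks \<and> pmax C1 < pmax C \<and> pmax C < pmax (uminus ` C1)"
proof -
  define b where "b = Min (pos_part (uminus ` C1))"
  define c where "c = pmax C"
  have C1': "uminus ` C1 \<in> mixed_blocks" using uminus_mixed_block[OF C1] .
  have C1P: "uminus ` C1 \<in> P" using C1' mixed_blocks_subset by auto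
  have CM: "C \<in> mixed_blocks" using mixed_blocksI[OF C(1-3)] ij by simp
  have "b \<in> pos_part (uminus ` C1)"
    unfolding b_def using Min_pos_part_in[OF C1'] .
  then have b: "b \<in> uminus ` C1" "- pmax C1 \<in> uminus ` C1" "b \<le> pmax (uminus ` C1)"
    using pmax_ge[OF C1'] pmax_in[OF C1] pos_partD by auto
  have c: "c \<in> C" "i \<le> c" "c \<le> int n"
    using pmax_in[OF CM] pmax_ge[OF CM] pos_partI[OF C(1,2)] pos_partD ij c_def by auto
  have "c \<noteq> b" using block_eqI[OF C(1) C1P c(1)] b(1) C(4) by auto
  moreover have "\<not> b < c"
  proof
    assume "b < c"
    moreover have "0 < pmax C1" using pmax_in[OF C1] pos_partD by auto
    ultimately show False
      using noncrossing[OF C(1) C1P C(4) C(2) c(1) b(1) b(2)] c ij inside b_def by simp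
  qed
  ultimately show ?thesis using CM c b(3) inside c_def b_def by simp
qed

lemma same_block_neg_across_edge:
  assumes C1: "C1 \<in> mixed_blocks" and less: "pmax C1 < pmax (uminus ` C1)"
    and gap: "\<And>C. C \<in> mixed_blocks \<Longrightarrow> \<not> (pmax C1 < pmax C \<and> pmax C < pmax (uminus ` C1))"
    and "same_block P i (- j)" "0 < i" "i < j"
  shows "i \<le> pmax C1 \<and> Min (pos_part (uminus ` C1)) \<le> j"
proof -
  define a where "a = pmax C1"
  define b where "b = Min (pos_part (uminus ` C1))"
  obtain C where C: "C \<in> P" "i \<in> C" "- j \<in> C" using assms(4) by (rule same_blockE)
  have C1': "uminus ` C1 \<in> mixed_blocks" using uminus_mixed_block[OF C1] .
  have C1P: "C1 \<in> P" "uminus ` C1 \<in> P" using C1 C1' mixed_blocks_subset by auto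
  have ab: "a < b" using pmax_less_Min_pos_part_uminus[OF C1 less] a_def b_def by simp
  have a: "a \<in> C1" "0 < a" "a \<le> int n" using pmax_in[OF C1] pos_partD a_def by auto
  have b_in: "b \<in> pos_part (uminus ` C1)"
    unfolding b_def using Min_pos_part_in[OF C1'] .
  have b: "- b \<in> C1" "0 < b" "b \<le> int n" using pos_partD[OF b_in] mem_uminus_image_iff by auto
  have j: "j \<in> uminus ` C" using C(3) mem_uminus_image_iff by simp
  have i_le: "i \<le> int n" using block_elem[OF C(1) C(2)] by auto
  consider "C = C1" | "C = uminus ` C1" | "C \<noteq> C1" "C \<noteq> uminus ` C1" by blast
  then show ?thesis
  proof cases
    case 1
    then show ?thesis
      using pmax_ge[OF C1] Min_pos_part_le[OF C1'] pos_partI C j assms(5,6) C1P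
      unfolding a_def b_def by auto
  next
    case 2
    then have "b \<le> i" "j \<le> a"
      using pmax_ge[OF C1] Min_pos_part_le[OF C1'] pos_partI C j assms(5,6) C1P
      unfolding a_def b_def by (auto simp: image_image)
    then show ?thesis using ab assms(6) by simp
  next
    case 3
    have "i \<noteq> a" "j \<noteq> b" using block_eqI[OF C(1) C1P(1)] C a(1) b(1) 3(1) by auto
    moreover have "\<not> (i < a \<and> j < b)"
      using noncrossing[OF C(1) C1P(1) 3(1) C(2) C(3) a(1) b(1)] a b assms(5,6) by auto
    moreover have "\<not> (a < i \<and> b < j)"
      using noncrossing[OF C1P(1) C(1) 3(1)[symmetric] a(1) b(1) C(2) C(3)] a b i_le assms(5,6)
      by auto
    moreover have "\<not> (a < i \<and> j < b)"
      using mixed_block_inside_edge[OF C1 less C 3(2) assms(5,6)] gap a_def b_def by auto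
    ultimately show ?thesis unfolding a_def b_def by auto
  qed
qed

lemma mixed_block_gap:
  assumes "1 \<le> k" "k < card mixed_blocks" "C \<in> mixed_blocks"
  shows "\<not> (pmax (mixed_block k) < pmax C \<and> pmax C < pmax (mixed_block (Suc k)))"
proof -
  obtain l where "1 \<le> l" "l \<le> card mixed_blocks" "mixed_block l = C"
    using mixed_block_surj[OF assms(3)] by metis
  then show ?thesis
    using mixed_block_pmax_less_iff[of k l] mixed_block_pmax_less_iff[of l "Suc k"] assms by auto
qed

lemma middle_pair_case:
  assumes m: "even (card mixed_blocks)" "card mixed_blocks \<noteq> 0"
    and ij: "0 < i" "i < j" and either: "same_block P i j \<or> same_block P i (- j)"
  defines "C \<equiv> mixed_block (card mixed_blocks div 2)"
  shows "if i \<le> pmax C \<and> Min (pos_part (uminus ` C)) \<le> j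
         then \<not> same_block P i j \<and> same_block P i (- j)
         else same_block P i j \<and> \<not> same_block P i (- j)"
proof -
  define h where "h = card mixed_blocks div 2"
  have h: "1 \<le> h" "h < card mixed_blocks" "card mixed_blocks + 1 - h = Suc h"
    using m unfolding h_def by auto
  have C: "C \<in> mixed_blocks" using mixed_block_pmax_nth[of h] h C_def h_def by simp
  have C': "mixed_block (Suc h) = uminus ` C"
    using mixed_block_uminus[of h] h C_def h_def by simp
  have less: "pmax C < pmax (uminus ` C)"
    using mixed_block_pmax_less_iff[of h "Suc h"] h C' C_def h_def by simp
  have gap: "\<not> (pmax C < pmax D \<and> pmax D < pmax (uminus ` C))" if "D \<in> mixed_blocks" for D
    using mixed_block_gap[OF h(1,2) that] C' C_def h_def by simp
  show ?thesis
    using not_same_block_across_edge[OF C less _ ij] same_block_neg_across_edge[OF C less gap _ ij] either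
    by auto
qed

lemma middle_block_case:
  assumes m: "odd (card mixed_blocks)"
    and ij: "0 < i" "i < j" and either: "same_block P i j \<or> same_block P i (- j)"
  defines "B \<equiv> pos_part (mixed_block ((card mixed_blocks + 1) div 2))"
  shows "if {i, j} \<subseteq> B then same_block P i j \<and> same_block P i (- j)
         else if i < Min B \<and> Max B < j then \<not> same_block P i j \<and> same_block P i (- j)
         else same_block P i j \<and> \<not> same_block P i (- j)"
proof -
  define k where "k = (card mixed_blocks + 1) div 2"
  have k: "1 \<le> k" "k \<le> card mixed_blocks" "card mixed_blocks + 1 - k = k"
    using m unfolding k_def by (auto elim: oddE)
  have "mixed_block k \<in> P" using mixed_block_pmax_nth[OF k(1,2)] mixed_blocks_subset by simp
  moreover have "uminus ` mixed_block k = mixed_block k" using mixed_block_uminus[OF k(1,2)] k(3) by simp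
  ultimately show ?thesis using self_neg_block_case ij either unfolding B_def k_def by blast
qed

lemma not_same_block_neg_if_no_mixed_blocks:
  assumes "card mixed_blocks = 0" "0 < i" "0 < j"
  shows "\<not> same_block P i (- j)"
  using assms same_block_neg_mixed[of i j] finite_mixed_blocks by (metis card_0_eq empty_iff)

lemma snd_psi:
  "snd (psi n P) =
    (if card mixed_blocks = 0 then XEmpty
     else if even (card mixed_blocks)
     then XEdge (pmax (mixed_block (card mixed_blocks div 2)))
                (Min (pos_part (uminus ` mixed_block (card mixed_blocks div 2))))
     else XBlock (pos_part (mixed_block ((card mixed_blocks + 1) div 2))))"
proof -
  define m where "m = card mixed_blocks"
  have "Ablk n P (m div 2) = pos_part (mixed_block (m div 2))"
    "Ablk n P (m div 2 + 1) = pos_part (uminus ` mixed_block (m div 2))"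
    if "even m" "m \<noteq> 0"
  proof -
    from \<open>even m\<close> obtain t where t: "m = 2 * t" by (rule evenE)
    with that show "Ablk n P (m div 2) = pos_part (mixed_block (m div 2))"
      using Ablk_eq[of t] m_def by simp
    from t that show "Ablk n P (m div 2 + 1) = pos_part (uminus ` mixed_block (m div 2))"
      using Ablk_eq[of "Suc t"] mixed_block_uminus[of t] m_def by simp
  qed
  moreover have "Ablk n P ((m + 1) div 2) = pos_part (mixed_block ((m + 1) div 2))" if "odd m"
    using that Ablk_eq[of "(m + 1) div 2"] m_def by (auto elim: oddE)
  ultimately show ?thesis
    unfolding psi_def Let_def card_XB m_def[symmetric] pmax_def by simp
qed

end

theorem lemma3p3:
  fixes n :: nat and \<pi> \<sigma> :: "int set set" and x :: xdata and i j :: int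
  assumes "n \<ge> 1" and "\<pi> \<in> NCB n" and "psi n \<pi> = (\<sigma>, x)"
    and "1 \<le> i" and "i < j" and "j \<le> int n" and "same_block \<sigma> i j"
  shows "(x = XEmpty \<longrightarrow> same_block \<pi> i j \<and> \<not> same_block \<pi> i (- j))
       \<and> (\<forall>a b. x = XEdge a b \<longrightarrow>
            (if i \<le> a \<and> b \<le> j
             then \<not> same_block \<pi> i j \<and> same_block \<pi> i (- j)
             else same_block \<pi> i j \<and> \<not> same_block \<pi> i (- j)))
       \<and> (\<forall>B. x = XBlock B \<longrightarrow>
            (if {i, j} \<subseteq> B
             then same_block \<pi> i j \<and> same_block \<pi> i (- j)
             else if i < Min B \<and> Max B < j
             then \<not> same_block \<pi> i j \<and> same_block \<pi> i (- j)
             else same_block \<pi> i j \<and> \<not> same_block \<pi> i (- j)))"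
proof -
  interpret noncrossing_B n \<pi> by unfold_locales (rule assms(2))
  have ij: "0 < i" "i < j" using assms(4,5) by auto
  have either: "same_block \<pi> i j \<or> same_block \<pi> i (- j)"
    using same_block_psi[OF assms(3,7)] ij by simp
  have x: "x = snd (psi n \<pi>)" using assms(3) by simp
  consider "card mixed_blocks = 0" | "card mixed_blocks \<noteq> 0" "even (card mixed_blocks)"
    | "odd (card mixed_blocks)" by blast
  then show ?thesis
  proof cases
    case 1
    then show ?thesis using not_same_block_neg_if_no_mixed_blocks ij either x snd_psi by simp
  next
    case 2
    then show ?thesis using middle_pair_case[OF 2(2,1) ij either] x snd_psi by simp
  next
    case 3
    then show ?thesis using middle_block_case[OF 3 ij either] x snd_psi by auto
  qed
qed

end
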